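(* For every $n\ge 2$, $\beta(P_{2\infty}\,\Box\, P_n)=3$, and $S=\{(0,0),(0,n-1),(1,0)\}$ is a metric basis of $P_{2\infty}\,\Box\, P_n$.
   Context: $P_{2\infty}$ has vertex set $\mathbb Z$ and $P_n$ has vertex set $\{0,1,\dots,n-1\}$; in both, $i,j$ are adjacent iff $|i-j|=1$. The cartesian product $G\Box H$ has vertex set $V(G)\times V(H)$, where $(a,v)$ is adjacent to $(b,w)$ iff either $a=b$ and $vw\in E(H)$, or $v=w$ and $ab\in E(G)$. A vertex $x$ resolves $u,v$ if $d(u,x)\ne d(v,x)$ (shortest-path distance); a resolving set is a set of vertices resolving every pair of distinct vertices; $\beta$ is the minimum cardinality of a resolving set ($\infty$ if none is finite), and a metric basis is a resolving set of cardinality $\beta$. *)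

theory Defs
  imports Main "HOL-Library.Extended_Nat"
begin

text \<open>A graph is given by a vertex set V and a symmetric adjacency relation adj.\<close>

definition is_walk :: "'a set \<Rightarrow> ('a \<Rightarrow> 'a \<Rightarrow> bool) \<Rightarrow> 'a list \<Rightarrow> bool" where
  "is_walk V adj xs \<longleftrightarrow> xs \<noteq> [] \<and> set xs \<subseteq> V \<and>
     (\<forall>i. Suc i < length xs \<longrightarrow> adj (xs ! i) (xs ! Suc i))"

text \<open>Shortest-path distance (infinity if no walk exists).\<close>
definition gdist :: "'a set \<Rightarrow> ('a \<Rightarrow> 'a \<Rightarrow> bool) \<Rightarrow> 'a \<Rightarrow> 'a \<Rightarrow> enat" where
  "gdist V adj u v = (INF xs \<in> {xs. is_walk V adj xs \<and> hd xs = u \<and> last xs = v}.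
                        enat (length xs - 1))"

definition resolves :: "'a set \<Rightarrow> ('a \<Rightarrow> 'a \<Rightarrow> bool) \<Rightarrow> 'a \<Rightarrow> 'a \<Rightarrow> 'a \<Rightarrow> bool" where
  "resolves V adj x u v \<longleftrightarrow> gdist V adj u x \<noteq> gdist V adj v x"

definition resolving_set :: "'a set \<Rightarrow> ('a \<Rightarrow> 'a \<Rightarrow> bool) \<Rightarrow> 'a set \<Rightarrow> bool" where
  "resolving_set V adj S \<longleftrightarrow> S \<subseteq> V \<and>
     (\<forall>u\<in>V. \<forall>v\<in>V. u \<noteq> v \<longrightarrow> (\<exists>x\<in>S. resolves V adj x u v))"

definition metric_dim :: "'a set \<Rightarrow> ('a \<Rightarrow> 'a \<Rightarrow> bool) \<Rightarrow> enat" where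
  "metric_dim V adj = (INF S \<in> {S. finite S \<and> resolving_set V adj S}. enat (card S))"

definition metric_basis :: "'a set \<Rightarrow> ('a \<Rightarrow> 'a \<Rightarrow> bool) \<Rightarrow> 'a set \<Rightarrow> bool" where
  "metric_basis V adj S \<longleftrightarrow> finite S \<and> resolving_set V adj S \<and> enat (card S) = metric_dim V adj"

definition P2inf_V :: "int set" where "P2inf_V = UNIV"
definition P2inf_adj :: "int \<Rightarrow> int \<Rightarrow> bool" where "P2inf_adj i j \<longleftrightarrow> \<bar>i - j\<bar> = 1"

definition Pn_V :: "nat \<Rightarrow> nat set" where "Pn_V n = {0..<n}"
definition Pn_adj :: "nat \<Rightarrow> nat \<Rightarrow> bool" where "Pn_adj i j \<longleftrightarrow> i + 1 = j \<or> j + 1 = i"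

definition cprod_V :: "'a set \<Rightarrow> 'b set \<Rightarrow> ('a \<times> 'b) set" where
  "cprod_V VG VH = VG \<times> VH"
definition cprod_adj :: "('a \<Rightarrow> 'a \<Rightarrow> bool) \<Rightarrow> ('b \<Rightarrow> 'b \<Rightarrow> bool) \<Rightarrow> 'a \<times> 'b \<Rightarrow> 'a \<times> 'b \<Rightarrow> bool" where
  "cprod_adj adjG adjH p q \<longleftrightarrow>
     (fst p = fst q \<and> adjH (snd p) (snd q)) \<or> (snd p = snd q \<and> adjG (fst p) (fst q))"

end

theory Submission
  imports Defs
begin

(* In the grid G = P_2inf \<box> P_n the graph distance is the Manhattan
   distance |a - c| + |b - e|.  We prove this via a general criterion: a nat-valued
   function d that satisfies the triangle inequality, is at most 1 on edges, vanishes
   exactly on the diagonal and can always be decreased by one along an edge, coincides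
   with gdist.  Afterwards everything is arithmetic on Manhattan distances:
   - the landmarks (0,0), (0,n-1), (1,0) determine the row b (from the first two) and
     then the column a (from the first and third), so S is resolving;
   - for any two vertices x1, x2 there is a pair of distinct vertices at equal
     Manhattan distance from both (a "corner" pair to the left of both landmarks on a
     boundary row not containing them, or a pair around the landmark on row 0 if the
     landmarks occupy both boundary rows), so no set of at most 2 vertices resolves G. *)

section \<open>Walks and graph distance in general graphs\<close>

lemma is_walk_Cons:
  "is_walk V adj (x # xs) \<longleftrightarrow> x \<in> V \<and> (xs = [] \<or> (adj x (hd xs) \<and> is_walk V adj xs))"
proof (cases xs)
  case Nil
  then show ?thesis by (simp add: is_walk_def)
next
  case (Cons y ys)
  have "(\<forall>i. Suc i < length (x # xs) \<longrightarrow> adj ((x # xs) ! i) ((x # xs) ! Suc i))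
        \<longleftrightarrow> adj x y \<and> (\<forall>i. Suc i < length xs \<longrightarrow> adj (xs ! i) (xs ! Suc i))"
    (is "?all \<longleftrightarrow> _")
  proof
    assume ?all
    then show "adj x y \<and> (\<forall>i. Suc i < length xs \<longrightarrow> adj (xs ! i) (xs ! Suc i))"
      using Cons by (metis Suc_less_eq length_Cons nth_Cons_0 nth_Cons_Suc zero_less_Suc)
  next
    assume "adj x y \<and> (\<forall>i. Suc i < length xs \<longrightarrow> adj (xs ! i) (xs ! Suc i))"
    then show ?all using Cons by (auto simp: less_Suc_eq_0_disj nth_Cons split: nat.split)
  qed
  then show ?thesis using Cons by (auto simp: is_walk_def)
qed

lemma walk_length_lower_bound:
  fixes d :: "'a \<Rightarrow> 'a \<Rightarrow> nat"
  assumes tri: "\<And>p q r. d p r \<le> d p q + d q r"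
    and edge: "\<And>p q. adj p q \<Longrightarrow> d p q \<le> 1"
    and refl: "\<And>p. d p p = 0"
    and walk: "is_walk V adj xs"
  shows "d (hd xs) (last xs) \<le> length xs - 1"
  using walk
proof (induction xs)
  case Nil
  then show ?case by (simp add: is_walk_def)
next
  case (Cons x ys)
  show ?case
  proof (cases ys)
    case Nil
    then show ?thesis by (simp add: refl)
  next
    case (Cons y zs)
    then have "adj x (hd ys)" and "is_walk V adj ys"
      using Cons.prems by (auto simp: is_walk_Cons)
    have "d x (last ys) \<le> d x (hd ys) + d (hd ys) (last ys)" by (rule tri)
    also have "\<dots> \<le> 1 + (length ys - 1)"
      using edge[OF \<open>adj x (hd ys)\<close>] Cons.IH[OF \<open>is_walk V adj ys\<close>] by simp
    finally show ?thesis using Cons by simp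
  qed
qed

lemma walk_of_length_exists:
  fixes d :: "'a \<Rightarrow> 'a \<Rightarrow> nat"
  assumes zero: "\<And>u v. u \<in> V \<Longrightarrow> v \<in> V \<Longrightarrow> d u v = 0 \<Longrightarrow> u = v"
    and step: "\<And>u v k. u \<in> V \<Longrightarrow> v \<in> V \<Longrightarrow> d u v = Suc k \<Longrightarrow> \<exists>w\<in>V. adj u w \<and> d w v = k"
    and "u \<in> V" "v \<in> V"
  shows "\<exists>xs. is_walk V adj xs \<and> hd xs = u \<and> last xs = v \<and> length xs = Suc (d u v)"
  using \<open>u \<in> V\<close>
proof (induction "d u v" arbitrary: u)
  case 0
  then have "u = v" using zero \<open>v \<in> V\<close> by simp
  then show ?case using 0 by (intro exI[of _ "[u]"]) (simp add: is_walk_def)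
next
  case (Suc k)
  obtain w where w: "w \<in> V" "adj u w" "d w v = k"
    using step[OF Suc.prems \<open>v \<in> V\<close> Suc.hyps(2)[symmetric]] by blast
  obtain xs where xs: "is_walk V adj xs" "hd xs = w" "last xs = v" "length xs = Suc k"
    using Suc.hyps(1)[of w] w by auto
  then have "xs \<noteq> []" by auto
  then show ?case
    using xs w Suc.prems Suc.hyps(2) by (intro exI[of _ "u # xs"]) (simp add: is_walk_Cons)
qed

lemma gdist_eqI:
  fixes d :: "'a \<Rightarrow> 'a \<Rightarrow> nat"
  assumes tri: "\<And>p q r. d p r \<le> d p q + d q r"
    and edge: "\<And>p q. adj p q \<Longrightarrow> d p q \<le> 1"
    and refl: "\<And>p. d p p = 0"
    and zero: "\<And>u v. u \<in> V \<Longrightarrow> v \<in> V \<Longrightarrow> d u v = 0 \<Longrightarrow> u = v"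
    and step: "\<And>u v k. u \<in> V \<Longrightarrow> v \<in> V \<Longrightarrow> d u v = Suc k \<Longrightarrow> \<exists>w\<in>V. adj u w \<and> d w v = k"
    and "u \<in> V" "v \<in> V"
  shows "gdist V adj u v = enat (d u v)"
proof (rule antisym)
  obtain xs where "is_walk V adj xs" "hd xs = u" "last xs = v" "length xs = Suc (d u v)"
    using walk_of_length_exists[where V = V and adj = adj and d = d, OF zero step] assms by blast
  then show "gdist V adj u v \<le> enat (d u v)"
    unfolding gdist_def by (intro INF_lower2[of xs]) auto
  show "enat (d u v) \<le> gdist V adj u v"
    unfolding gdist_def
    using walk_length_lower_bound[OF tri edge refl] by (intro INF_greatest) fastforce
qed

lemma metric_basis_eqI:
  assumes "finite S" "resolving_set V adj S" "card S = k"
    and lower: "\<And>T. finite T \<Longrightarrow> resolving_set V adj T \<Longrightarrow> k \<le> card T"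
  shows "metric_dim V adj = enat k" "metric_basis V adj S"
proof -
  show dim: "metric_dim V adj = enat k"
    unfolding metric_dim_def
  proof (rule antisym)
    show "(INF T\<in>{T. finite T \<and> resolving_set V adj T}. enat (card T)) \<le> enat k"
      using assms by (intro INF_lower2[of S]) auto
    show "enat k \<le> (INF T\<in>{T. finite T \<and> resolving_set V adj T}. enat (card T))"
      using lower by (intro INF_greatest) auto
  qed
  show "metric_basis V adj S"
    using assms dim by (simp add: metric_basis_def)
qed

lemma card_le_2_subset_pair:
  assumes "finite S" "card S \<le> 2" "S \<subseteq> V" "y \<in> V"
  shows "\<exists>x1\<in>V. \<exists>x2\<in>V. S \<subseteq> {x1, x2}"
proof -
  consider "card S = 0" | "card S = 1" | "card S = 2" using assms(2) by linarith
  then show ?thesis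
  proof cases
    case 1
    then show ?thesis using assms by auto
  next
    case 2
    then obtain x where "S = {x}" by (rule card_1_singletonE)
    then show ?thesis using assms by auto
  next
    case 3
    then show ?thesis using assms by (auto simp: card_2_iff)
  qed
qed

section \<open>The grid P_2inf \<box> P_n\<close>

abbreviation grid_V :: "nat \<Rightarrow> (int \<times> nat) set" where
  "grid_V n \<equiv> cprod_V P2inf_V (Pn_V n)"

abbreviation grid_adj :: "int \<times> nat \<Rightarrow> int \<times> nat \<Rightarrow> bool" where
  "grid_adj \<equiv> cprod_adj P2inf_adj Pn_adj"

definition manhattan :: "int \<times> nat \<Rightarrow> int \<times> nat \<Rightarrow> nat" where
  "manhattan p q = nat (\<bar>fst p - fst q\<bar> + \<bar>int (snd p) - int (snd q)\<bar>)"

lemma manhattan_Pair: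
  "manhattan (a, b) (c, e) = nat (\<bar>a - c\<bar> + \<bar>int b - int e\<bar>)"
  by (simp add: manhattan_def)

lemma grid_V_iff: "p \<in> grid_V n \<longleftrightarrow> snd p < n"
  by (cases p) (auto simp: cprod_V_def P2inf_V_def Pn_V_def)

lemma manhattan_triangle: "manhattan p r \<le> manhattan p q + manhattan q r"
  by (cases p; cases q; cases r) (simp add: manhattan_Pair nat_add_distrib[symmetric] del: nat_add_distrib; arith)

lemma manhattan_grid_edge: "grid_adj p q \<Longrightarrow> manhattan p q = 1"
  by (cases p; cases q) (auto simp: cprod_adj_def P2inf_adj_def Pn_adj_def manhattan_Pair)

lemma manhattan_grid_step:
  assumes "u \<in> grid_V n" "v \<in> grid_V n" "manhattan u v = Suc k"
  shows "\<exists>w\<in>grid_V n. grid_adj u w \<and> manhattan w v = k"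
proof -
  obtain a b c e where u: "u = (a, b)" and v: "v = (c, e)" by (cases u; cases v)
  have "b < n" "e < n" using assms u v by (auto simp: grid_V_iff)
  have m: "nat (\<bar>a - c\<bar> + \<bar>int b - int e\<bar>) = Suc k"
    using assms(3) u v by (simp add: manhattan_Pair)
  consider "a < c" | "a > c" | "a = c" "b < e" | "a = c" "b > e"
    using m by fastforce
  then show ?thesis
  proof cases
    case 1
    then show ?thesis using \<open>b < n\<close> m unfolding u v
      by (intro bexI[of _ "(a + 1, b)"]) (auto simp: grid_V_iff manhattan_Pair cprod_adj_def P2inf_adj_def)
  next
    case 2
    then show ?thesis using \<open>b < n\<close> m unfolding u v
      by (intro bexI[of _ "(a - 1, b)"]) (auto simp: grid_V_iff manhattan_Pair cprod_adj_def P2inf_adj_def)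
  next
    case 3
    then show ?thesis using \<open>e < n\<close> m unfolding u v
      by (intro bexI[of _ "(a, b + 1)"]) (auto simp: grid_V_iff manhattan_Pair cprod_adj_def Pn_adj_def)
  next
    case 4
    then show ?thesis using \<open>b < n\<close> m unfolding u v
      by (intro bexI[of _ "(a, b - 1)"]) (auto simp: grid_V_iff manhattan_Pair cprod_adj_def Pn_adj_def)
  qed
qed

lemma gdist_grid:
  assumes "u \<in> grid_V n" "v \<in> grid_V n"
  shows "gdist (grid_V n) grid_adj u v = enat (manhattan u v)"
proof (rule gdist_eqI[OF manhattan_triangle _ _ _ manhattan_grid_step assms])
  show "manhattan p q \<le> 1" if "grid_adj p q" for p q
    using manhattan_grid_edge[OF that] by simp
  show "manhattan p p = 0" for p
    by (simp add: manhattan_def)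
  show "u = v" if "manhattan u v = 0" for u v
    using that by (cases u; cases v) (auto simp: manhattan_Pair)
qed

lemma grid_resolves_iff:
  assumes "x \<in> grid_V n" "u \<in> grid_V n" "v \<in> grid_V n"
  shows "resolves (grid_V n) grid_adj x u v \<longleftrightarrow> manhattan u x \<noteq> manhattan v x"
  using assms by (simp add: resolves_def gdist_grid)

section \<open>The landmarks (0,0), (0,n-1), (1,0) resolve the grid\<close>

text \<open>The distances to (0,0) and (0,n-1) determine the row, and then the distances
  to (0,0) and (1,0) determine the column.\<close>
lemma landmark_distances_determine_vertex:
  assumes "b < n" "e < n"
    and "manhattan (a, b) (0, 0) = manhattan (c, e) (0, 0)"
    and "manhattan (a, b) (0, n - 1) = manhattan (c, e) (0, n - 1)"
    and "manhattan (a, b) (1, 0) = manhattan (c, e) (1, 0)"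
  shows "(a, b) = (c, e)"
proof -
  have 1: "\<bar>a\<bar> + int b = \<bar>c\<bar> + int e"
    using assms(3) by (simp add: manhattan_Pair)
  have 2: "\<bar>a\<bar> + (int n - 1 - int b) = \<bar>c\<bar> + (int n - 1 - int e)"
    using assms(1,2,4) by (simp add: manhattan_Pair of_nat_diff)
  have 3: "\<bar>a - 1\<bar> + int b = \<bar>c - 1\<bar> + int e"
    using assms(5) by (simp add: manhattan_Pair)
  from 1 2 have "b = e" by linarith
  moreover from 1 3 this have "a = c" by linarith
  ultimately show ?thesis by simp
qed

lemma landmarks_resolving:
  assumes "n \<ge> 2"
  shows "resolving_set (grid_V n) grid_adj {(0, 0), (0, n - 1), (1, 0)}"
  unfolding resolving_set_def
proof (intro conjI ballI impI)
  show landmarks: "{(0, 0), (0, n - 1), (1, 0)} \<subseteq> grid_V n"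
    using assms by (auto simp: grid_V_iff)
  fix u v assume uv: "u \<in> grid_V n" "v \<in> grid_V n" "u \<noteq> v"
  obtain a b c e where u: "u = (a, b)" and v: "v = (c, e)" by (cases u; cases v)
  have "b < n" "e < n" using uv u v by (auto simp: grid_V_iff)
  then have "\<exists>x\<in>{(0, 0), (0, n - 1), (1, 0)}. manhattan u x \<noteq> manhattan v x"
    using landmark_distances_determine_vertex[of b n e a c] uv u v by auto
  then show "\<exists>x\<in>{(0, 0), (0, n - 1), (1, 0)}. resolves (grid_V n) grid_adj x u v"
    using grid_resolves_iff uv landmarks by blast
qed

section \<open>No two vertices resolve the grid\<close>

lemma boundary_landmarks_unresolved:
  assumes n: "n \<ge> 2"
  shows "\<exists>u\<in>grid_V n. \<exists>v\<in>grid_V n. u \<noteq> v \<and>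
           manhattan u (c, 0) = manhattan v (c, 0) \<and> manhattan u (d, n - 1) = manhattan v (d, n - 1)"
proof -
  consider "c < d" | "c > d" | "c = d" by linarith
  then show ?thesis
  proof cases
    case 1
    with n show ?thesis
      by (intro bexI[of _ "(c, 1)"] bexI[of _ "(c + 1, 0)"])
        (auto simp: grid_V_iff manhattan_Pair of_nat_diff)
  next
    case 2
    with n show ?thesis
      by (intro bexI[of _ "(c, 1)"] bexI[of _ "(c - 1, 0)"])
        (auto simp: grid_V_iff manhattan_Pair of_nat_diff)
  next
    case 3
    with n show ?thesis
      by (intro bexI[of _ "(c - 1, 0)"] bexI[of _ "(c + 1, 0)"])
        (auto simp: grid_V_iff manhattan_Pair of_nat_diff)
  qed
qed

text \<open>If both avoid the bottom (resp. top) row, the bottom (resp. top) corner to the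
  left of both and its diagonal neighbour inwards form such a pair; otherwise the two
  vertices occupy both boundary rows.\<close>
lemma two_landmarks_unresolved:
  assumes n: "n \<ge> 2" and x: "x1 \<in> grid_V n" "x2 \<in> grid_V n"
  shows "\<exists>u\<in>grid_V n. \<exists>v\<in>grid_V n. u \<noteq> v \<and>
           manhattan u x1 = manhattan v x1 \<and> manhattan u x2 = manhattan v x2"
proof -
  obtain c1 e1 c2 e2 where x1: "x1 = (c1, e1)" and x2: "x2 = (c2, e2)" by (cases x1; cases x2)
  have "e1 < n" "e2 < n" using x x1 x2 by (auto simp: grid_V_iff)
  define a where "a = min c1 c2"
  have a: "a \<le> c1" "a \<le> c2" unfolding a_def by auto
  consider "e1 \<ge> 1" "e2 \<ge> 1" | "e1 \<le> n - 2" "e2 \<le> n - 2"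
    | "e1 = 0" "e2 = n - 1" | "e1 = n - 1" "e2 = 0"
    using \<open>e1 < n\<close> \<open>e2 < n\<close> n by linarith
  then show ?thesis
  proof cases
    case 1
    with a n show ?thesis unfolding x1 x2
      by (intro bexI[of _ "(a, 0)"] bexI[of _ "(a - 1, 1)"]) (auto simp: grid_V_iff manhattan_Pair)
  next
    case 2
    with a n show ?thesis unfolding x1 x2
      by (intro bexI[of _ "(a, n - 1)"] bexI[of _ "(a - 1, n - 2)"])
        (auto simp: grid_V_iff manhattan_Pair of_nat_diff)
  next
    case 3
    then show ?thesis using boundary_landmarks_unresolved[OF n, of c1 c2] x1 x2 by simp
  next
    case 4
    then show ?thesis using boundary_landmarks_unresolved[OF n, of c2 c1] x1 x2 by blast
  qed
qed

lemma grid_resolving_card_ge_3: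
  assumes n: "n \<ge> 2" and S: "finite S" "resolving_set (grid_V n) grid_adj S"
  shows "3 \<le> card S"
proof (rule ccontr)
  assume "\<not> 3 \<le> card S"
  then have "card S \<le> 2" by simp
  moreover have "S \<subseteq> grid_V n" using S by (simp add: resolving_set_def)
  moreover have "(0, 0) \<in> grid_V n" using n by (simp add: grid_V_iff)
  ultimately obtain x1 x2 where x: "x1 \<in> grid_V n" "x2 \<in> grid_V n" "S \<subseteq> {x1, x2}"
    using card_le_2_subset_pair[OF S(1)] by blast
  obtain u v where uv: "u \<in> grid_V n" "v \<in> grid_V n" "u \<noteq> v"
      "manhattan u x1 = manhattan v x1" "manhattan u x2 = manhattan v x2"
    using two_landmarks_unresolved[OF n x(1,2)] by blast
  then obtain z where "z \<in> S" "resolves (grid_V n) grid_adj z u v"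
    using S(2) unfolding resolving_set_def by blast
  then show False using uv x grid_resolves_iff by blast
qed

theorem proposition5:
  fixes n :: nat
  assumes "n \<ge> 2"
  shows "metric_dim (cprod_V P2inf_V (Pn_V n)) (cprod_adj P2inf_adj Pn_adj) = 3
       \<and> metric_basis (cprod_V P2inf_V (Pn_V n)) (cprod_adj P2inf_adj Pn_adj)
           {(0, 0), (0, n - 1), (1, 0)}"
proof -
  let ?S = "{(0, 0), (0, n - 1), (1, 0)} :: (int \<times> nat) set"
  have "card ?S = 3" using assms by simp
  from metric_basis_eqI[OF _ landmarks_resolving[OF assms] this grid_resolving_card_ge_3[OF assms]]
  show ?thesis by (simp add: numeral_eq_enat)
qed

end
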